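(* For any two distinct invertible quantum states $\rho,\sigma$ on a common finite-dimensional Hilbert space, \[ H_{\frac12}(\rho\|\sigma)\le\left(\frac{\big(e^{\frac12D_\infty(\rho\|\sigma)}-1\big)^2}{e^{D_\infty(\rho\|\sigma)}-1}+\frac{\big(e^{\frac12D_\infty(\sigma\|\rho)}-1\big)^2}{e^{D_\infty(\sigma\|\rho)}-1}\right)E_1(\rho\|\sigma). \]
   Context: $\log$ is natural. $E_\gamma(\rho\|\sigma)=\mathrm{Tr}(\rho-\gamma\sigma)_+$; $E_1(\rho\|\sigma)=\frac12\|\rho-\sigma\|_1$. $H_{\frac12}(\rho\|\sigma)=\frac12\int_1^\infty\gamma^{-3/2}(E_\gamma(\rho\|\sigma)+E_\gamma(\sigma\|\rho))d\gamma$. The max-relative entropy is $D_\infty(\rho\|\sigma)=\log\|\sigma^{-1/2}\rho\sigma^{-1/2}\|_\infty$ (for invertible $\sigma$). *)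

theory Defs
  imports "HOL-Analysis.Analysis"
begin

text \<open>Operators on a finite-dimensional Hilbert space are complex n x n matrices,
  the dimension being given by the finite index type 'n.\<close>

definition adjoint :: "complex^'n^'n \<Rightarrow> complex^'n^'n" where
  "adjoint A = (\<chi> i j. cnj (A $ j $ i))"

definition hermitian :: "complex^'n^'n \<Rightarrow> bool" where
  "hermitian A \<longleftrightarrow> adjoint A = A"

definition unitary :: "complex^'n^'n \<Rightarrow> bool" where
  "unitary U \<longleftrightarrow> adjoint U ** U = mat 1 \<and> U ** adjoint U = mat 1"

definition diag_mat :: "('n \<Rightarrow> complex) \<Rightarrow> complex^'n^'n" where
  "diag_mat d = (\<chi> i j. if i = j then d i else 0)"

definition qform :: "complex^'n^'n \<Rightarrow> complex^'n \<Rightarrow> complex" where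
  "qform A x = (\<Sum>i\<in>UNIV. \<Sum>j\<in>UNIV. cnj (x $ i) * A $ i $ j * x $ j)"

definition psd :: "complex^'n^'n \<Rightarrow> bool" where
  "psd A \<longleftrightarrow> hermitian A \<and> (\<forall>x. 0 \<le> Re (qform A x))"

definition quantum_state :: "complex^'n^'n \<Rightarrow> bool" where
  "quantum_state \<rho> \<longleftrightarrow> psd \<rho> \<and> trace \<rho> = 1"

definition mat_fun :: "(real \<Rightarrow> real) \<Rightarrow> complex^'n^'n \<Rightarrow> complex^'n^'n" where
  "mat_fun f A = (SOME B. \<exists>U d. unitary U \<and> A = U ** diag_mat (\<lambda>i. complex_of_real (d i)) ** adjoint U
      \<and> B = U ** diag_mat (\<lambda>i. complex_of_real (f (d i))) ** adjoint U)"

definition pos_part :: "complex^'n^'n \<Rightarrow> complex^'n^'n" where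
  "pos_part A = mat_fun (\<lambda>t. max t 0) A"

definition E_hs :: "real \<Rightarrow> complex^'n^'n \<Rightarrow> complex^'n^'n \<Rightarrow> real" where
  "E_hs \<gamma> \<rho> \<sigma> = Re (trace (pos_part (\<rho> - \<gamma> *\<^sub>R \<sigma>)))"

definition H_half :: "complex^'n^'n \<Rightarrow> complex^'n^'n \<Rightarrow> real" where
  "H_half \<rho> \<sigma> = 1/2 * (LBINT \<gamma>:{1..}. \<gamma> powr (-3/2) * (E_hs \<gamma> \<rho> \<sigma> + E_hs \<gamma> \<sigma> \<rho>))"

definition op_norm :: "complex^'n^'n \<Rightarrow> real" where
  "op_norm A = onorm (\<lambda>x. A *v x)"

definition D_max :: "complex^'n^'n \<Rightarrow> complex^'n^'n \<Rightarrow> real" where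
  "D_max \<rho> \<sigma> = ln (op_norm (mat_fun (\<lambda>t. t powr (-1/2)) \<sigma> ** \<rho> ** mat_fun (\<lambda>t. t powr (-1/2)) \<sigma>))"

end

(*
  Let M = exp D_max(rho||sigma), so that rho <= M sigma; as rho and sigma are distinct states,
  M > 1. For a Hermitian X, Tr(X)_+ is the maximum, over orthonormal bases (v_l) and index sets S,
  of the sums of <v_l, X v_l> over l in S. Hence E_gamma(rho||sigma) is a maximum of affine
  functions a - gamma b of gamma with a <= M b and a - b <= E_1(rho||sigma), which gives
  E_gamma(rho||sigma) <= (M - gamma)_+ / (M - 1) * E_1(rho||sigma) for gamma >= 1. The same bound
  holds with rho and sigma exchanged, because E_1 is symmetric on states, and integrating against
  gamma^(-3/2) / 2 with  int_1^M gamma^(-3/2) (M - gamma) dgamma = 2 (sqrt M - 1)^2  yields the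
  theorem. The spectral theorem for Hermitian matrices, on which positive parts and inverse square
  roots rest, comes from maximizing the Rayleigh quotient.
*)

theory Submission
  imports Defs
begin

section \<open>Eigenvectors of self-adjoint maps\<close>

lemma quadratic_nonpos_imp_linear_coeff_zero:
  fixes b c :: real
  assumes "\<And>t. b * t + c * t\<^sup>2 \<le> 0"
  shows "b = 0"
proof (rule ccontr)
  assume "b \<noteq> 0"
  define s where "s = \<bar>c\<bar> + 1"
  have "s > 0" by (simp add: s_def add_nonneg_pos)
  define t where "t = b / s"
  have "(1 - s) * t\<^sup>2 \<le> c * t\<^sup>2" unfolding s_def by (rule mult_right_mono) auto
  moreover have "b * t + (1 - s) * t\<^sup>2 = b\<^sup>2 / s\<^sup>2"
    using \<open>s > 0\<close> by (simp add: t_def field_simps power2_eq_square)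
  moreover have "b\<^sup>2 / s\<^sup>2 > 0" using \<open>b \<noteq> 0\<close> \<open>s > 0\<close> by simp
  ultimately show False using assms[of t] by linarith
qed

lemma quadratic_form_max_on_subspace:
  fixes f :: "'a::euclidean_space \<Rightarrow> 'a"
  assumes "linear f" and "subspace W" and "W \<noteq> {0}"
  obtains x where "x \<in> W" and "norm x = 1"
    and "\<And>y. y \<in> W \<Longrightarrow> inner y (f y) \<le> inner x (f x) * (norm y)\<^sup>2"
proof -
  define q where "q x = inner x (f x)" for x
  define K where "K = W \<inter> sphere 0 1"
  have "compact K"
    unfolding K_def using closed_subspace[OF \<open>subspace W\<close>] by (intro closed_Int_compact) auto
  obtain z where "z \<in> W" "z \<noteq> 0" using \<open>W \<noteq> {0}\<close> \<open>subspace W\<close> subspace_0 by blast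
  then have "(1 / norm z) *\<^sub>R z \<in> K" using \<open>subspace W\<close> by (simp add: K_def subspace_scale)
  then have "K \<noteq> {}" by auto
  have "continuous_on K q"
    unfolding q_def using \<open>linear f\<close>
    by (intro continuous_intros linear_continuous_on) (simp add: linear_conv_bounded_linear)
  then obtain x where "x \<in> K" and x_max: "\<And>y. y \<in> K \<Longrightarrow> q y \<le> q x"
    using continuous_attains_sup[OF \<open>compact K\<close> \<open>K \<noteq> {}\<close>] by blast
  have q_scale: "q (c *\<^sub>R y) = c\<^sup>2 * q y" for c y
    using \<open>linear f\<close> by (simp add: q_def linear_scale power2_eq_square)
  have "q y \<le> q x * (norm y)\<^sup>2" if "y \<in> W" for y
  proof (cases "y = 0")
    case True
    then show ?thesis using \<open>linear f\<close> by (simp add: q_def linear_0)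
  next
    case False
    then have "(1 / norm y) *\<^sub>R y \<in> K" using that \<open>subspace W\<close> by (simp add: K_def subspace_scale)
    then have "q y / (norm y)\<^sup>2 \<le> q x" using x_max by (fastforce simp: q_scale power_divide)
    then show ?thesis using False by (simp add: divide_le_eq mult.commute)
  qed
  then show ?thesis using that \<open>x \<in> K\<close> by (auto simp: K_def q_def)
qed

lemma selfadjoint_max_quadratic_form_eigenvector:
  fixes f :: "'a::euclidean_space \<Rightarrow> 'a"
  assumes "linear f" and selfadjoint: "\<And>x y. inner x (f y) = inner (f x) y"
    and "subspace W" and invariant: "f ` W \<subseteq> W" and "x \<in> W" and "norm x = 1"
    and x_max: "\<And>y. y \<in> W \<Longrightarrow> inner y (f y) \<le> inner x (f x) * (norm y)\<^sup>2"
  shows "f x = inner x (f x) *\<^sub>R x"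
proof -
  define l where "l = inner x (f x)"
  define y where "y = f x - l *\<^sub>R x"
  have "y \<in> W"
    unfolding y_def using \<open>x \<in> W\<close> invariant \<open>subspace W\<close> by (auto intro: subspace_diff subspace_scale)
  have "inner x x = 1" using \<open>norm x = 1\<close> by (simp add: power2_norm_eq_inner[symmetric])
  then have "inner x y = 0" by (simp add: y_def inner_diff_right l_def)
  have "inner x (f y) = inner y y"
  proof -
    have "inner x (f y) = inner (y + l *\<^sub>R x) y" by (simp add: selfadjoint y_def)
    then show ?thesis using \<open>inner x y = 0\<close> by (simp add: inner_add_left inner_commute[of x y])
  qed
  \<comment> \<open>Maximality of x along the line x + t y forces the linear coefficient in t to vanish.\<close>
  have "2 * inner y y * t + (inner y (f y) - l * inner y y) * t\<^sup>2 \<le> 0" for t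
  proof -
    have "inner y (f x) = inner y y"
      using \<open>inner x (f y) = inner y y\<close> selfadjoint inner_commute by metis
    then have "inner (x + t *\<^sub>R y) (f (x + t *\<^sub>R y)) = l + 2 * inner y y * t + inner y (f y) * t\<^sup>2"
      using \<open>linear f\<close> \<open>inner x (f y) = inner y y\<close>
      by (simp add: l_def linear_add linear_scale inner_add_left inner_add_right
          power2_eq_square algebra_simps)
    moreover have "(norm (x + t *\<^sub>R y))\<^sup>2 = 1 + inner y y * t\<^sup>2"
      using \<open>inner x x = 1\<close> \<open>inner x y = 0\<close>
      unfolding power2_norm_eq_inner
      by (simp add: inner_add_left inner_add_right inner_commute[of y x] power2_eq_square algebra_simps)
    moreover have "x + t *\<^sub>R y \<in> W"
      using \<open>x \<in> W\<close> \<open>y \<in> W\<close> \<open>subspace W\<close> by (intro subspace_add subspace_scale)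
    ultimately have "l + 2 * inner y y * t + inner y (f y) * t\<^sup>2 \<le> l * (1 + inner y y * t\<^sup>2)"
      using x_max unfolding l_def by metis
    then show ?thesis by (simp add: algebra_simps)
  qed
  then have "inner y y = 0" using quadratic_nonpos_imp_linear_coeff_zero by fastforce
  then show ?thesis by (simp add: y_def l_def)
qed

lemma selfadjoint_invariant_subspace_has_eigenvector:
  fixes f :: "'a::euclidean_space \<Rightarrow> 'a"
  assumes "linear f" and "\<And>x y. inner x (f y) = inner (f x) y"
    and "subspace W" and "f ` W \<subseteq> W" and "W \<noteq> {0}"
  obtains x l where "x \<in> W" and "norm x = 1" and "f x = l *\<^sub>R x"
  using quadratic_form_max_on_subspace[OF assms(1,3,5)]
    selfadjoint_max_quadratic_form_eigenvector[OF assms(1-4)] by metis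

lemma scaleR_vec_component: "(c *\<^sub>R x) $ i = of_real c * (x :: complex^'n) $ i"
  unfolding vector_scaleR_component by (simp add: scaleR_conv_of_real)

lemma diff_scaleR_entry: "(A - c *\<^sub>R B) $ i $ j = A $ i $ j - of_real c * B $ i $ j"
  unfolding vector_minus_component vector_scaleR_component by (simp add: scaleR_conv_of_real)

lemma adjoint_mult: "adjoint (A ** B) = adjoint B ** adjoint (A :: complex^'n^'n)"
  by (simp add: adjoint_def vec_eq_iff matrix_matrix_mult_def mult.commute)

lemma adjoint_adjoint_mat: "adjoint (adjoint A) = (A :: complex^'n^'n)"
  by (simp add: adjoint_def vec_eq_iff)

lemma adjoint_diag_mat_real: "adjoint (diag_mat (\<lambda>i. of_real (d i))) = diag_mat (\<lambda>i. of_real (d i))"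
  by (simp add: adjoint_def diag_mat_def vec_eq_iff)

lemma hermitian_iff_entries: "hermitian A \<longleftrightarrow> (\<forall>i j. cnj (A $ j $ i) = A $ i $ j)"
  by (auto simp: hermitian_def adjoint_def vec_eq_iff)

lemma hermitian_diff_scaleR: "hermitian A \<Longrightarrow> hermitian B \<Longrightarrow> hermitian (A - c *\<^sub>R B)"
  by (simp add: hermitian_iff_entries scaleR_vec_component)

lemma mult_diag_mat_entry: "(A ** diag_mat a) $ i $ j = A $ i $ j * a j"
  by (simp add: matrix_matrix_mult_def diag_mat_def if_distrib if_distribR cong: if_cong)

lemma diag_mat_mult_entry: "(diag_mat a ** A) $ i $ j = a i * A $ i $ j"
  by (simp add: matrix_matrix_mult_def diag_mat_def if_distrib if_distribR cong: if_cong)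

lemma diag_mat_1: "diag_mat (\<lambda>k. 1) = mat 1"
  by (simp add: diag_mat_def mat_def)

lemma conj_diag_mat_entry:
  "(U ** diag_mat a ** adjoint U) $ i $ j = (\<Sum>k\<in>UNIV. U $ i $ k * a k * cnj (U $ j $ k))"
  by (simp add: matrix_matrix_mult_def[of "U ** diag_mat a"] mult_diag_mat_entry adjoint_def)

definition cinner :: "complex^'n \<Rightarrow> complex^'n \<Rightarrow> complex" where
  "cinner x y = (\<Sum>i\<in>UNIV. cnj (x $ i) * y $ i)"

lemma Re_cinner: "Re (cinner x y) = inner x y"
  by (simp add: cinner_def inner_vec_def inner_complex_def Re_sum)

lemma Im_cinner: "Im (cinner x y) = inner (\<i> *s x) y"
  by (simp add: cinner_def inner_vec_def inner_complex_def Im_sum algebra_simps)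

lemma cinner_eq_0_iff: "cinner x y = 0 \<longleftrightarrow> orthogonal x y \<and> orthogonal (\<i> *s x) y"
  by (simp add: complex_eq_iff Re_cinner Im_cinner orthogonal_def)

lemma cinner_commute: "cinner y x = cnj (cinner x y)"
  by (simp add: cinner_def cnj_sum mult.commute)

lemma cinner_scaleR_left: "cinner (c *\<^sub>R x) y = of_real c * cinner x y"
  unfolding cinner_def scaleR_vec_component by (simp add: sum_distrib_left mult.assoc)

lemma cinner_scaleR_right: "cinner x (c *\<^sub>R y) = of_real c * cinner x y"
  unfolding cinner_def scaleR_vec_component by (simp add: sum_distrib_left mult.left_commute)

lemma cinner_self: "cinner x x = of_real ((norm x)\<^sup>2)"
proof -
  have "cinner x x = (\<Sum>i\<in>UNIV. of_real ((cmod (x $ i))\<^sup>2))"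
    unfolding cinner_def by (intro sum.cong refl) (metis complex_norm_square mult.commute of_real_power)
  also have "\<dots> = of_real ((norm x)\<^sup>2)"
    by (simp add: norm_vec_def L2_set_def sum_nonneg)
  finally show ?thesis .
qed

lemma cinner_mult_vec_right: "cinner x (B *v y) = cinner (adjoint B *v x) y"
proof -
  have "cinner x (B *v y) = (\<Sum>i\<in>UNIV. \<Sum>j\<in>UNIV. cnj (x $ i) * B $ i $ j * y $ j)"
    by (simp add: cinner_def matrix_vector_mult_def sum_distrib_left mult.assoc)
  also have "\<dots> = (\<Sum>j\<in>UNIV. \<Sum>i\<in>UNIV. cnj (x $ i) * B $ i $ j * y $ j)"
    by (rule sum.swap)
  also have "\<dots> = cinner (adjoint B *v x) y"
    by (simp add: cinner_def adjoint_def matrix_vector_mult_def sum_distrib_left sum_distrib_right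
        mult.commute mult.left_commute)
  finally show ?thesis .
qed

lemma cinner_axis_left: "cinner (axis l 1) y = y $ l"
proof -
  have "cnj (axis l 1 $ i) * y $ i = (if i = l then y $ i else 0)" for i by (simp add: axis_def)
  then show ?thesis by (simp add: cinner_def)
qed

lemma mult_vec_axis: "(A *v axis l 1) $ i = A $ i $ l"
proof -
  have "A $ i $ j * axis l 1 $ j = (if j = l then A $ i $ l else 0)" for j by (simp add: axis_def)
  then show ?thesis by (simp add: matrix_vector_mult_def)
qed

lemma hermitian_cinner: "hermitian A \<Longrightarrow> cinner x (A *v y) = cinner (A *v x) y"
  by (simp add: cinner_mult_vec_right hermitian_def)

lemma hermitian_inner: "hermitian A \<Longrightarrow> inner x (A *v y) = inner (A *v x) y"
  by (metis Re_cinner hermitian_cinner)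

lemma adjoint_mult_entry: "(adjoint U ** V) $ a $ b = cinner (column a U) (column b V)"
  by (simp add: matrix_matrix_mult_def adjoint_def cinner_def column_def)

lemma adjoint_mult_column_entry: "(adjoint U *v column l V) $ k = (adjoint U ** V) $ k $ l"
  by (simp add: matrix_vector_mult_def matrix_matrix_mult_def column_def)

lemma unitary_adjoint_mult: "unitary U \<Longrightarrow> unitary V \<Longrightarrow> unitary (adjoint U ** V)"
  unfolding unitary_def adjoint_mult adjoint_adjoint_mat by (metis matrix_mul_assoc matrix_mul_lid)

lemma unitary_cinner_columns:
  "unitary U \<Longrightarrow> cinner (column a U) (column b U) = (if a = b then 1 else 0)"
  using adjoint_mult_entry[of U U a b] by (simp add: unitary_def mat_def)

lemma unitary_row_norm: "unitary U \<Longrightarrow> (\<Sum>l\<in>UNIV. (cmod (U $ k $ l))\<^sup>2) = 1"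
proof -
  assume "unitary U"
  then have "(\<Sum>l\<in>UNIV. U $ k $ l * cnj (U $ k $ l)) = 1"
    by (simp add: unitary_def vec_eq_iff matrix_matrix_mult_def adjoint_def mat_def)
  then have "of_real (\<Sum>l\<in>UNIV. (cmod (U $ k $ l))\<^sup>2) = (1 :: complex)"
    by (simp only: complex_norm_square[symmetric] of_real_sum)
  then show ?thesis using of_real_eq_1_iff by blast
qed

section \<open>The spectral theorem\<close>

lemma hermitian_eigenvector_orthogonal:
  fixes A :: "complex^'n^'n" and u :: "nat \<Rightarrow> complex^'n"
  assumes "hermitian A" and "k < CARD('n)" and eigen: "\<And>j. j < k \<Longrightarrow> A *v u j = d j *\<^sub>R u j"
  shows "\<exists>x l. norm x = 1 \<and> (\<forall>j<k. cinner (u j) x = 0) \<and> A *v x = l *\<^sub>R x"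
proof -
  define S where "S = u ` {..<k} \<union> (\<lambda>v. \<i> *s v) ` u ` {..<k}"
  define W where "W = {x. \<forall>j<k. cinner (u j) x = 0}"
  \<comment> \<open>Over the reals, complex orthogonality to u j is orthogonality to both u j and i u j.\<close>
  have W_eq: "W = {y. \<forall>x\<in>S. orthogonal x y}" by (auto simp: W_def S_def cinner_eq_0_iff)
  have "subspace W" unfolding W_eq by (rule subspace_orthogonal_to_vectors)
  have c1: "card (u ` {..<k}) \<le> k" using card_image_le[of "{..<k}" u] by simp
  have c2: "card ((\<lambda>v. \<i> *s v) ` u ` {..<k}) \<le> k"
    using card_image_le[of "u ` {..<k}" "\<lambda>v. \<i> *s v"] c1 by simp
  have "card S \<le> k + k" unfolding S_def using card_Un_le c1 c2 by (meson add_mono order_trans)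
  then have "dim S < DIM(complex^'n)" using dim_le_card'[of S] \<open>k < CARD('n)\<close> by (simp add: S_def)
  then obtain z :: "complex^'n" where "z \<noteq> 0" and "\<And>y. y \<in> span S \<Longrightarrow> orthogonal z y"
    using orthogonal_to_subspace_exists by blast
  then have "z \<in> W" unfolding W_eq by (auto intro: span_base simp: orthogonal_commute)
  then have "W \<noteq> {0}" using \<open>z \<noteq> 0\<close> by blast
  have "A *v y \<in> W" if "y \<in> W" for y
  proof -
    have "cinner (u j) (A *v y) = of_real (d j) * cinner (u j) y" if "j < k" for j
      using hermitian_cinner[OF \<open>hermitian A\<close>] eigen[OF that] by (simp add: cinner_scaleR_left)
    then show ?thesis using \<open>y \<in> W\<close> by (simp add: W_def)
  qed
  then obtain x l where "x \<in> W" "norm x = 1" "A *v x = l *\<^sub>R x"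
    using selfadjoint_invariant_subspace_has_eigenvector[OF matrix_vector_mul_linear
        hermitian_inner[OF \<open>hermitian A\<close>] \<open>subspace W\<close> _ \<open>W \<noteq> {0}\<close>]
    by blast
  then show ?thesis by (auto simp: W_def)
qed

lemma hermitian_orthonormal_eigenvectors:
  fixes A :: "complex^'n^'n"
  assumes "hermitian A"
  shows "k \<le> CARD('n) \<Longrightarrow> \<exists>u d. \<forall>i<k. A *v u i = d i *\<^sub>R u i
           \<and> (\<forall>j<k. cinner (u i) (u j) = (if i = j then 1 else 0))"
proof (induction k)
  case 0
  show ?case by simp
next
  case (Suc k)
  then obtain u d where IH: "\<forall>i<k. A *v u i = d i *\<^sub>R u i
           \<and> (\<forall>j<k. cinner (u i) (u j) = (if i = j then 1 else 0))"
    by auto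
  obtain x l where "norm x = 1" and orth: "\<forall>j<k. cinner (u j) x = 0" and "A *v x = l *\<^sub>R x"
    using hermitian_eigenvector_orthogonal[OF assms, of k u d] Suc.prems IH by auto
  have "cinner x x = 1" using \<open>norm x = 1\<close> by (simp add: cinner_self)
  moreover have "cinner x (u j) = 0" if "j < k" for j
    using orth that cinner_commute by (metis complex_cnj_zero)
  ultimately have "cinner ((u(k := x)) i) ((u(k := x)) j) = (if i = j then 1 else 0)"
    if "i < Suc k" "j < Suc k" for i j
    using IH orth that by (cases "i = k"; cases "j = k") auto
  moreover have "A *v (u(k := x)) i = (d(k := l)) i *\<^sub>R (u(k := x)) i" if "i < Suc k" for i
    using IH \<open>A *v x = l *\<^sub>R x\<close> that by (cases "i = k") auto
  ultimately show ?case by blast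
qed

definition spectral_decomp :: "complex^'n^'n \<Rightarrow> ('n \<Rightarrow> real) \<Rightarrow> complex^'n^'n \<Rightarrow> bool" where
  "spectral_decomp U d A \<longleftrightarrow> unitary U \<and> A = U ** diag_mat (\<lambda>i. of_real (d i)) ** adjoint U"

theorem hermitian_spectral_decomp:
  fixes A :: "complex^'n^'n"
  assumes "hermitian A"
  obtains U d where "spectral_decomp U d A"
proof -
  obtain u d where eig: "\<forall>i<CARD('n). A *v u i = d i *\<^sub>R u i
      \<and> (\<forall>j<CARD('n). cinner (u i) (u j) = (if i = j then 1 else 0))"
    using hermitian_orthonormal_eigenvectors[OF assms, of "CARD('n)"] by auto
  obtain g :: "'n \<Rightarrow> nat" where g: "bij_betw g UNIV {..<CARD('n)}"
    using ex_bij_betw_finite_nat[of "UNIV :: 'n set"] by (auto simp: atLeast0LessThan)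
  then have "g c < CARD('n)" for c by (auto dest: bij_betw_apply)
  have "inj g" using g by (simp add: bij_betw_def)
  define U :: "complex^'n^'n" where "U = (\<chi> r c. u (g c) $ r)"
  have column_U: "column c U = u (g c)" for c by (simp add: U_def column_def vec_eq_iff)
  have "adjoint U ** U = mat 1"
    using eig \<open>\<And>c. g c < CARD('n)\<close> \<open>inj g\<close>
    by (simp add: vec_eq_iff adjoint_mult_entry column_U mat_def inj_eq)
  then have "unitary U" by (simp add: unitary_def matrix_left_right_inverse)
  have "A ** U = U ** diag_mat (\<lambda>c. of_real (d (g c)))"
  proof -
    have "(A ** U) $ r $ c = (A *v u (g c)) $ r" for r c
      by (simp add: matrix_matrix_mult_def matrix_vector_mult_def U_def)
    also have "\<dots> r c = of_real (d (g c)) * u (g c) $ r" for r c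
      using eig \<open>\<And>c. g c < CARD('n)\<close> by (metis scaleR_vec_component)
    finally show ?thesis by (simp add: vec_eq_iff mult_diag_mat_entry U_def mult.commute)
  qed
  then have "A = U ** diag_mat (\<lambda>c. of_real (d (g c))) ** adjoint U"
    using \<open>unitary U\<close> by (metis matrix_mul_assoc matrix_mul_rid unitary_def)
  then show ?thesis using that \<open>unitary U\<close> by (auto simp: spectral_decomp_def)
qed

lemma spectral_decomp_hermitian: "spectral_decomp U d A \<Longrightarrow> hermitian A"
  by (simp add: spectral_decomp_def hermitian_def adjoint_mult adjoint_adjoint_mat
      adjoint_diag_mat_real matrix_mul_assoc)

lemma spectral_decomp_eigen:
  assumes "spectral_decomp U d A"
  shows "A *v column k U = d k *\<^sub>R column k U"
proof -
  have "A ** U = U ** diag_mat (\<lambda>i. of_real (d i)) ** (adjoint U ** U)"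
    using assms by (simp add: spectral_decomp_def matrix_mul_assoc)
  then have "A ** U = U ** diag_mat (\<lambda>i. of_real (d i))"
    using assms by (simp add: spectral_decomp_def unitary_def)
  then have "(A ** U) $ i $ k = of_real (d k) * U $ i $ k" for i
    by (simp add: mult_diag_mat_entry mult.commute)
  then have "(A *v column k U) $ i = of_real (d k) * column k U $ i" for i
    by (simp add: matrix_matrix_mult_def matrix_vector_mult_def column_def)
  then show ?thesis by (simp only: vec_eq_iff scaleR_vec_component) blast
qed

lemma spectral_decomp_uminus: "spectral_decomp U d A \<Longrightarrow> spectral_decomp U (\<lambda>i. - d i) (- A)"
  by (simp add: spectral_decomp_def vec_eq_iff conj_diag_mat_entry sum_negf)

lemma trace_conj_diag_mat:
  assumes "unitary U"
  shows "trace (U ** diag_mat (\<lambda>i. of_real (f i)) ** adjoint U) = of_real (\<Sum>k\<in>UNIV. f k)"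
proof -
  have "trace ((U ** diag_mat (\<lambda>i. of_real (f i))) ** adjoint U)
      = trace (adjoint U ** (U ** diag_mat (\<lambda>i. of_real (f i))))"
    by (rule trace_mul_sym)
  then show ?thesis using assms by (simp add: matrix_mul_assoc unitary_def trace_def diag_mat_def)
qed

lemma conj_diag_mat_mult:
  assumes "unitary U"
  shows "(U ** diag_mat a ** adjoint U) ** (U ** diag_mat b ** adjoint U)
    = U ** diag_mat (\<lambda>k. a k * b k) ** adjoint U"
proof -
  have "(U ** diag_mat a ** adjoint U) ** (U ** diag_mat b ** adjoint U)
      = U ** diag_mat a ** (adjoint U ** U) ** diag_mat b ** adjoint U"
    by (simp add: matrix_mul_assoc)
  also have "\<dots> = U ** (diag_mat a ** diag_mat b) ** adjoint U"
    using assms by (simp add: unitary_def matrix_mul_assoc)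
  also have "diag_mat a ** diag_mat b = diag_mat (\<lambda>k. a k * b k)"
    by (simp add: vec_eq_iff diag_mat_mult_entry) (simp add: diag_mat_def)
  finally show ?thesis .
qed

lemma mat_fun_spectral_decomp:
  assumes "hermitian A"
  obtains U d where "spectral_decomp U d A"
    and "mat_fun f A = U ** diag_mat (\<lambda>i. of_real (f (d i))) ** adjoint U"
proof -
  obtain U d where "spectral_decomp U d A" using hermitian_spectral_decomp[OF assms] .
  have "\<exists>U d. unitary U \<and> A = U ** diag_mat (\<lambda>i. of_real (d i)) ** adjoint U
      \<and> mat_fun f A = U ** diag_mat (\<lambda>i. of_real (f (d i))) ** adjoint U"
    unfolding mat_fun_def
    by (rule someI_ex) (use \<open>spectral_decomp U d A\<close> in \<open>auto simp: spectral_decomp_def\<close>)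
  then obtain U' d' where "unitary U'" "A = U' ** diag_mat (\<lambda>i. of_real (d' i)) ** adjoint U'"
    and "mat_fun f A = U' ** diag_mat (\<lambda>i. of_real (f (d' i))) ** adjoint U'"
    by blast
  then show ?thesis using that[of U' d'] unfolding spectral_decomp_def by blast
qed

lemma qform_eq_cinner: "qform A x = cinner x (A *v x)"
  by (simp add: qform_def cinner_def matrix_vector_mult_def sum_distrib_left mult.assoc)

lemma qform_diff_scaleR: "qform (A - c *\<^sub>R B) x = qform A x - of_real c * qform B x"
  unfolding qform_def diff_scaleR_entry by (simp add: sum_subtractf sum_distrib_left algebra_simps)

lemma qform_axis: "qform A (axis l 1) = A $ l $ l"
  by (simp add: qform_eq_cinner cinner_axis_left mult_vec_axis)

lemma Re_trace_eq_sum_qform_axis: "Re (trace A) = (\<Sum>l\<in>UNIV. Re (qform A (axis l 1)))"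
  by (simp add: trace_def qform_axis Re_sum)

lemma qform_mult_vec: "qform A (B *v y) = qform (adjoint B ** A ** B) y"
proof -
  have "qform A (B *v y) = cinner y (adjoint B *v (A *v (B *v y)))"
    using cinner_mult_vec_right[of y "adjoint B"] by (simp add: qform_eq_cinner adjoint_adjoint_mat)
  then show ?thesis by (simp add: qform_eq_cinner matrix_vector_mul_assoc matrix_mul_assoc)
qed

lemma qform_le_op_norm: "Re (qform A y) \<le> op_norm A * (norm y)\<^sup>2"
proof -
  have "Re (qform A y) \<le> norm y * norm (A *v y)"
    unfolding qform_eq_cinner Re_cinner by (rule norm_cauchy_schwarz)
  also have "\<dots> \<le> norm y * (op_norm A * norm y)"
    unfolding op_norm_def by (intro mult_left_mono onorm matrix_vector_mul_bounded_linear) simp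
  finally show ?thesis by (simp add: power2_eq_square mult_ac)
qed

lemma qform_conj_diag_mat:
  "qform (U ** diag_mat (\<lambda>i. of_real (d i)) ** adjoint U) v
     = of_real (\<Sum>k\<in>UNIV. d k * (cmod ((adjoint U *v v) $ k))\<^sup>2)"
proof -
  define c where "c = adjoint U *v v"
  have "qform (U ** diag_mat (\<lambda>i. of_real (d i)) ** adjoint U) v
      = cinner c (diag_mat (\<lambda>i. of_real (d i)) *v c)"
    by (simp add: qform_eq_cinner c_def cinner_mult_vec_right matrix_vector_mul_assoc [symmetric])
  also have "\<dots> = (\<Sum>k\<in>UNIV. of_real (d k) * (c $ k * cnj (c $ k)))"
    by (simp add: cinner_def matrix_vector_mult_def diag_mat_def if_distrib if_distribR
        mult.commute mult.left_commute cong: if_cong)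
  finally show ?thesis by (simp only: c_def complex_norm_square[symmetric] of_real_sum of_real_mult)
qed

lemma qform_spectral_column:
  assumes "spectral_decomp U d A"
  shows "qform A (column l U) = of_real (d l)"
  using assms spectral_decomp_eigen[OF assms] unitary_cinner_columns[of U l l]
  by (simp add: spectral_decomp_def qform_eq_cinner cinner_scaleR_right)

lemma psd_spectral_nonneg: "psd A \<Longrightarrow> spectral_decomp U d A \<Longrightarrow> 0 \<le> d k"
  by (metis psd_def qform_spectral_column Re_complex_of_real)

lemma psd_invertible_spectral_pos:
  assumes "psd A" and "invertible A" and dec: "spectral_decomp U d A"
  shows "0 < d k"
proof -
  obtain A' where "A' ** A = mat 1" using \<open>invertible A\<close> by (auto simp: invertible_def)
  have "column k U \<noteq> 0"
    using unitary_cinner_columns[of U k k] dec by (auto simp: spectral_decomp_def cinner_def)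
  then have "A *v column k U \<noteq> 0"
    by (metis \<open>A' ** A = mat 1\<close> matrix_vector_mul_assoc matrix_vector_mul_lid matrix_vector_mult_0_right)
  then have "d k \<noteq> 0" by (simp add: spectral_decomp_eigen[OF dec])
  then show ?thesis using psd_spectral_nonneg[OF \<open>psd A\<close> dec, of k] by simp
qed

lemma psd_trace_zero:
  assumes "psd A" and "trace A = 0"
  shows "A = 0"
proof -
  obtain U d where dec: "spectral_decomp U d A"
    using hermitian_spectral_decomp assms(1) psd_def by blast
  have "of_real (\<Sum>k\<in>UNIV. d k) = trace A"
    using dec by (simp add: spectral_decomp_def trace_conj_diag_mat)
  then have "(\<Sum>k\<in>UNIV. d k) = 0" using assms(2) by (metis of_real_eq_0_iff)
  then have "d k = 0" for k
    using psd_spectral_nonneg[OF assms(1) dec] sum_nonneg_eq_0_iff[of UNIV d] by simp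
  then show ?thesis using dec by (simp add: spectral_decomp_def vec_eq_iff conj_diag_mat_entry)
qed

section \<open>Trace of the positive part\<close>

lemma sum_qform_columns_le:
  assumes "spectral_decomp U d A" and "unitary V"
  shows "(\<Sum>l\<in>S. Re (qform A (column l V))) \<le> (\<Sum>k\<in>UNIV. max (d k) 0)"
proof -
  define W where "W = adjoint U ** V"
  have "unitary W" using assms unitary_adjoint_mult by (auto simp: spectral_decomp_def W_def)
  have "Re (qform A (column l V)) = (\<Sum>k\<in>UNIV. d k * (cmod (W $ k $ l))\<^sup>2)" for l
    using assms(1) by (simp add: spectral_decomp_def qform_conj_diag_mat adjoint_mult_column_entry W_def)
  then have "(\<Sum>l\<in>S. Re (qform A (column l V))) = (\<Sum>k\<in>UNIV. d k * (\<Sum>l\<in>S. (cmod (W $ k $ l))\<^sup>2))"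
    by (simp add: sum_distrib_left sum.swap[of _ S])
  also have "\<dots> \<le> (\<Sum>k\<in>UNIV. max (d k) 0)"
  proof (rule sum_mono)
    fix k
    have "(\<Sum>l\<in>S. (cmod (W $ k $ l))\<^sup>2) \<le> (\<Sum>l\<in>UNIV. (cmod (W $ k $ l))\<^sup>2)"
      by (rule sum_mono2) auto
    then have "(\<Sum>l\<in>S. (cmod (W $ k $ l))\<^sup>2) \<le> 1" using unitary_row_norm[OF \<open>unitary W\<close>] by simp
    moreover have "0 \<le> (\<Sum>l\<in>S. (cmod (W $ k $ l))\<^sup>2)" by (simp add: sum_nonneg)
    ultimately show "d k * (\<Sum>l\<in>S. (cmod (W $ k $ l))\<^sup>2) \<le> max (d k) 0"
      by (cases "d k \<ge> 0") (auto simp: mult_left_le mult_nonpos_nonneg)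
  qed
  finally show ?thesis .
qed

lemma sum_qform_columns_attains:
  assumes "spectral_decomp U d A"
  shows "(\<Sum>l\<in>{k. d k > 0}. Re (qform A (column l U))) = (\<Sum>k\<in>UNIV. max (d k) 0)"
proof -
  have "(\<Sum>l\<in>{k. d k > 0}. Re (qform A (column l U))) = (\<Sum>k\<in>UNIV. if d k > 0 then d k else 0)"
    by (simp add: qform_spectral_column[OF assms] sum.If_cases)
  also have "\<dots> = (\<Sum>k\<in>UNIV. max (d k) 0)" by (intro sum.cong) auto
  finally show ?thesis .
qed

text \<open>Although mat_fun picks an arbitrary spectral decomposition, Tr(A)_+ does not depend on
  it: it is the maximum of the partial sums of diagonal entries of A over all orthonormal bases.\<close>

lemma trace_pos_part_spectral:
  assumes "spectral_decomp U d A"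
  shows "Re (trace (pos_part A)) = (\<Sum>k\<in>UNIV. max (d k) 0)"
proof -
  obtain U' d' where dec': "spectral_decomp U' d' A"
    and "pos_part A = U' ** diag_mat (\<lambda>i. of_real (max (d' i) 0)) ** adjoint U'"
    using mat_fun_spectral_decomp[OF spectral_decomp_hermitian[OF assms]] unfolding pos_part_def .
  then have "Re (trace (pos_part A)) = (\<Sum>k\<in>UNIV. max (d' k) 0)"
    by (simp add: trace_conj_diag_mat spectral_decomp_def)
  also have "\<dots> = (\<Sum>k\<in>UNIV. max (d k) 0)"
  proof (rule antisym)
    show "(\<Sum>k\<in>UNIV. max (d' k) 0) \<le> (\<Sum>k\<in>UNIV. max (d k) 0)"
      using sum_qform_columns_le[OF assms] sum_qform_columns_attains[OF dec'] dec'
      by (metis spectral_decomp_def)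
    show "(\<Sum>k\<in>UNIV. max (d k) 0) \<le> (\<Sum>k\<in>UNIV. max (d' k) 0)"
      using sum_qform_columns_le[OF dec'] sum_qform_columns_attains[OF assms] assms
      by (metis spectral_decomp_def)
  qed
  finally show ?thesis .
qed

lemma sum_qform_columns_le_trace_pos_part:
  assumes "hermitian A" and "unitary V"
  shows "(\<Sum>l\<in>S. Re (qform A (column l V))) \<le> Re (trace (pos_part A))"
proof -
  obtain U d where "spectral_decomp U d A" using hermitian_spectral_decomp[OF assms(1)] .
  then show ?thesis using sum_qform_columns_le[OF _ assms(2)] trace_pos_part_spectral by metis
qed

lemma trace_pos_part_attained:
  assumes "hermitian A"
  obtains V S where "unitary V" and "Re (trace (pos_part A)) = (\<Sum>l\<in>S. Re (qform A (column l V)))"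
proof -
  obtain U d where "spectral_decomp U d A" using hermitian_spectral_decomp[OF assms] .
  then show ?thesis
    using that sum_qform_columns_attains trace_pos_part_spectral by (metis spectral_decomp_def)
qed

lemma trace_pos_part_nonneg: "hermitian A \<Longrightarrow> 0 \<le> Re (trace (pos_part A))"
  by (metis hermitian_spectral_decomp trace_pos_part_spectral max.cobounded2 sum_nonneg)

lemma trace_pos_part_uminus:
  assumes "hermitian A"
  shows "Re (trace (pos_part A)) - Re (trace (pos_part (- A))) = Re (trace A)"
proof -
  obtain U d where dec: "spectral_decomp U d A" using hermitian_spectral_decomp[OF assms] .
  have "Re (trace (pos_part A)) - Re (trace (pos_part (- A))) = (\<Sum>k\<in>UNIV. max (d k) 0 - max (- d k) 0)"
    by (simp add: trace_pos_part_spectral[OF dec] trace_pos_part_spectral[OF spectral_decomp_uminus[OF dec]]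
        sum_subtractf)
  also have "\<dots> = (\<Sum>k\<in>UNIV. d k)" by (intro sum.cong) auto
  also have "\<dots> = Re (trace A)" using dec by (simp add: spectral_decomp_def trace_conj_diag_mat)
  finally show ?thesis .
qed

lemma inverse_sqrt_sandwich:
  fixes A :: "complex^'n^'n"
  assumes "psd A" and "invertible A"
  defines "S \<equiv> mat_fun (\<lambda>t. t powr (-1/2)) A"
  shows "S ** A ** S = mat 1" and "adjoint S = S"
proof -
  have "hermitian A" using \<open>psd A\<close> by (simp add: psd_def)
  obtain U d where dec: "spectral_decomp U d A"
    and S: "S = U ** diag_mat (\<lambda>i. of_real (d i powr (-1/2))) ** adjoint U"
    unfolding S_def by (rule mat_fun_spectral_decomp[OF \<open>hermitian A\<close>])
  have "unitary U" and A: "A = U ** diag_mat (\<lambda>i. of_real (d i)) ** adjoint U"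
    using dec by (auto simp: spectral_decomp_def)
  have inv_sqrt: "d k powr (-1/2) * d k * d k powr (-1/2) = 1" for k
  proof -
    have "0 < d k" by (rule psd_invertible_spectral_pos[OF assms(1,2) dec])
    then have "d k powr (-1/2) * d k * d k powr (-1/2) = d k powr (-1/2) * d k powr 1 * d k powr (-1/2)"
      by simp
    also have "\<dots> = d k powr (-1/2 + 1 + -1/2)" by (simp only: powr_add)
    finally show ?thesis using \<open>0 < d k\<close> by simp
  qed
  have "S ** A ** S = U ** diag_mat (\<lambda>k. of_real (d k powr (-1/2)) * of_real (d k) * of_real (d k powr (-1/2)))
      ** adjoint U"
    unfolding S by (subst A) (simp add: conj_diag_mat_mult[OF \<open>unitary U\<close>])
  also have "\<dots> = mat 1"
    using \<open>unitary U\<close> inv_sqrt by (simp add: unitary_def diag_mat_1 flip: of_real_mult)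
  finally show "S ** A ** S = mat 1" .
  show "adjoint S = S"
    using spectral_decomp_hermitian[of U "\<lambda>i. d i powr (-1/2)"] \<open>unitary U\<close> S
    by (simp add: spectral_decomp_def hermitian_def)
qed

definition max_ratio :: "complex^'n^'n \<Rightarrow> complex^'n^'n \<Rightarrow> real" where
  "max_ratio \<rho> \<sigma> = op_norm (mat_fun (\<lambda>t. t powr (-1/2)) \<sigma> ** \<rho> ** mat_fun (\<lambda>t. t powr (-1/2)) \<sigma>)"

lemma D_max_eq_ln_max_ratio: "D_max \<rho> \<sigma> = ln (max_ratio \<rho> \<sigma>)"
  by (simp add: D_max_def max_ratio_def)

lemma qform_le_max_ratio:
  assumes "psd \<sigma>" and "invertible \<sigma>"
  shows "Re (qform \<rho> x) \<le> max_ratio \<rho> \<sigma> * Re (qform \<sigma> x)"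
proof -
  define S where "S = mat_fun (\<lambda>t. t powr (-1/2)) \<sigma>"
  have "S ** \<sigma> ** S = mat 1" and "adjoint S = S"
    using inverse_sqrt_sandwich[OF assms] by (simp_all add: S_def)
  define y where "y = (\<sigma> ** S) *v x"
  have x: "x = S *v y"
    using \<open>S ** \<sigma> ** S = mat 1\<close> by (simp add: y_def matrix_vector_mul_assoc matrix_mul_assoc)
  have "Re (qform \<sigma> x) = (norm y)\<^sup>2"
    unfolding x qform_mult_vec \<open>adjoint S = S\<close> \<open>S ** \<sigma> ** S = mat 1\<close>
    by (simp add: qform_eq_cinner cinner_self)
  moreover have "Re (qform \<rho> x) \<le> op_norm (S ** \<rho> ** S) * (norm y)\<^sup>2"
    unfolding x qform_mult_vec \<open>adjoint S = S\<close> by (rule qform_le_op_norm)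
  ultimately show ?thesis by (simp add: max_ratio_def S_def)
qed

lemma dominating_constant_gt_1:
  assumes "quantum_state \<rho>" and "quantum_state \<sigma>" and "\<rho> \<noteq> \<sigma>"
    and dominated: "\<And>x. Re (qform \<rho> x) \<le> M * Re (qform \<sigma> x)"
  shows "1 < M"
proof -
  have "psd \<rho>" "psd \<sigma>" "trace \<rho> = 1" "trace \<sigma> = 1"
    using assms(1,2) by (auto simp: quantum_state_def)
  have "Re (trace \<rho>) \<le> M * Re (trace \<sigma>)"
    unfolding Re_trace_eq_sum_qform_axis sum_distrib_left by (intro sum_mono dominated)
  then have "1 \<le> M" using \<open>trace \<rho> = 1\<close> \<open>trace \<sigma> = 1\<close> by simp
  moreover have "M \<noteq> 1"
  proof
    assume "M = 1"
    have "psd (\<sigma> - \<rho>)"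
      using hermitian_diff_scaleR[of \<sigma> \<rho> 1] qform_diff_scaleR[of \<sigma> 1 \<rho>] dominated \<open>M = 1\<close>
        \<open>psd \<rho>\<close> \<open>psd \<sigma>\<close>
      by (simp add: psd_def)
    moreover have "trace (\<sigma> - \<rho>) = 0" using \<open>trace \<rho> = 1\<close> \<open>trace \<sigma> = 1\<close> by (simp add: trace_sub)
    ultimately have "\<sigma> - \<rho> = 0" by (rule psd_trace_zero)
    then show False using \<open>\<rho> \<noteq> \<sigma>\<close> by simp
  qed
  ultimately show ?thesis by simp
qed

section \<open>Hockey-stick divergences\<close>

lemma affine_le_interpolation:
  fixes a b M \<gamma> \<epsilon> :: real
  assumes "0 \<le> b" and "a \<le> M * b" and "a - b \<le> \<epsilon>" and "1 < M" and "1 \<le> \<gamma>"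
  shows "a - \<gamma> * b \<le> \<epsilon> * (max (M - \<gamma>) 0 / (M - 1))"
proof (cases "\<gamma> \<le> M")
  case True
  have "(M - 1) * (a - \<gamma> * b) = (M - \<gamma>) * (a - b) + (\<gamma> - 1) * (a - M * b)"
    by (simp add: algebra_simps)
  also have "\<dots> \<le> (M - \<gamma>) * \<epsilon>"
    using True assms by (intro add_decreasing2 mult_left_mono mult_nonneg_nonpos) auto
  finally show ?thesis using True \<open>1 < M\<close> by (simp add: le_divide_eq mult.commute)
next
  case False
  then have "M * b \<le> \<gamma> * b" using \<open>0 \<le> b\<close> by (intro mult_right_mono) auto
  then show ?thesis using False \<open>a \<le> M * b\<close> by simp
qed

text \<open>E_gamma is a maximum of affine functions a - gamma b of gamma; domination by M sigma forces
  each of them to vanish at gamma = M, so E_gamma lies below the chord from (1, E_1) to (M, 0).\<close>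

lemma E_hs_le_interpolation:
  assumes "hermitian \<rho>" and "psd \<sigma>" and dominated: "\<And>x. Re (qform \<rho> x) \<le> M * Re (qform \<sigma> x)"
    and "1 < M" and "1 \<le> \<gamma>"
  shows "E_hs \<gamma> \<rho> \<sigma> \<le> E_hs 1 \<rho> \<sigma> * (max (M - \<gamma>) 0 / (M - 1))"
proof -
  have "hermitian \<sigma>" using \<open>psd \<sigma>\<close> by (simp add: psd_def)
  have herm: "hermitian (\<rho> - c *\<^sub>R \<sigma>)" for c by (rule hermitian_diff_scaleR[OF \<open>hermitian \<rho>\<close> \<open>hermitian \<sigma>\<close>])
  obtain V S where "unitary V"
    and attained: "E_hs \<gamma> \<rho> \<sigma> = (\<Sum>l\<in>S. Re (qform (\<rho> - \<gamma> *\<^sub>R \<sigma>) (column l V)))"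
    unfolding E_hs_def by (rule trace_pos_part_attained[OF herm])
  define a where "a = (\<Sum>l\<in>S. Re (qform \<rho> (column l V)))"
  define b where "b = (\<Sum>l\<in>S. Re (qform \<sigma> (column l V)))"
  have "E_hs \<gamma> \<rho> \<sigma> = a - \<gamma> * b"
    by (simp add: attained qform_diff_scaleR a_def b_def sum_subtractf sum_distrib_left)
  moreover have "0 \<le> b" unfolding b_def using \<open>psd \<sigma>\<close> by (intro sum_nonneg) (simp add: psd_def)
  moreover have "a \<le> M * b" unfolding a_def b_def sum_distrib_left by (intro sum_mono dominated)
  moreover have "a - b \<le> E_hs 1 \<rho> \<sigma>"
    using sum_qform_columns_le_trace_pos_part[OF herm \<open>unitary V\<close>, of 1 S]
    by (simp add: E_hs_def a_def b_def qform_diff_scaleR sum_subtractf del: scaleR_one)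
  ultimately show ?thesis using affine_le_interpolation \<open>1 < M\<close> \<open>1 \<le> \<gamma>\<close> by simp
qed

lemma E_hs_1_commute:
  assumes "hermitian \<rho>" and "hermitian \<sigma>" and "trace \<rho> = trace \<sigma>"
  shows "E_hs 1 \<sigma> \<rho> = E_hs 1 \<rho> \<sigma>"
proof -
  have "Re (trace (pos_part (\<rho> - \<sigma>))) - Re (trace (pos_part (- (\<rho> - \<sigma>)))) = Re (trace (\<rho> - \<sigma>))"
    using hermitian_diff_scaleR[OF assms(1,2), of 1] by (intro trace_pos_part_uminus) simp
  then show ?thesis using assms(3) by (simp add: E_hs_def trace_sub)
qed

section \<open>Integration against gamma powr (-3/2)\<close>

lemma hockey_stick_kernel_antiderivative:
  assumes "0 < \<gamma>"
  shows "((\<lambda>t. - 2 * M * t powr (-1/2) - 2 * t powr (1/2))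
           has_real_derivative \<gamma> powr (-3/2) * (M - \<gamma>)) (at \<gamma>)"
proof -
  have "((\<lambda>t. t powr a) has_real_derivative a * \<gamma> powr (a - 1)) (at \<gamma>)" for a
    using assms by (intro has_real_derivative_powr) auto
  then have "((\<lambda>t. - 2 * M * t powr (-1/2) - 2 * t powr (1/2)) has_real_derivative
      - 2 * M * ((-1/2) * \<gamma> powr (-1/2 - 1)) - 2 * ((1/2) * \<gamma> powr (1/2 - 1))) (at \<gamma>)"
    by (intro DERIV_diff DERIV_cmult)
  moreover have "\<gamma> powr (1/2 - 1) = \<gamma> * \<gamma> powr (-3/2)"
    using assms by (simp add: powr_mult_base)
  ultimately show ?thesis by (simp add: algebra_simps)
qed

lemma hockey_stick_kernel_integral:
  fixes M :: real
  assumes "1 \<le> M"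
  shows "set_integrable lborel {1..} (\<lambda>\<gamma>. \<gamma> powr (-3/2) * max (M - \<gamma>) 0)"
    and "(LBINT \<gamma>:{1..}. \<gamma> powr (-3/2) * max (M - \<gamma>) 0) = 2 * (sqrt M - 1)\<^sup>2"
proof -
  define f where "f \<gamma> = \<gamma> powr (-3/2) * (M - \<gamma>)" for \<gamma> :: real
  have support: "(\<lambda>\<gamma>. indicator {1..} \<gamma> *\<^sub>R (\<gamma> powr (-3/2) * max (M - \<gamma>) 0))
      = (\<lambda>\<gamma>::real. indicator {1..M} \<gamma> *\<^sub>R f \<gamma>)"
    by (auto simp: indicator_def f_def fun_eq_iff)
  have "continuous_on {1..M} f" unfolding f_def by (intro continuous_intros) auto
  then show "set_integrable lborel {1..} (\<lambda>\<gamma>. \<gamma> powr (-3/2) * max (M - \<gamma>) 0)"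
    unfolding set_integrable_def support by (rule borel_integrable_atLeastAtMost'[unfolded set_integrable_def])
  define F where "F t = - 2 * M * t powr (-1/2) - 2 * t powr (1/2)" for t :: real
  have "(LBINT \<gamma>. indicator {1..M} \<gamma> *\<^sub>R f \<gamma>) = F M - F 1"
  proof (rule integral_FTC_atLeastAtMost[OF \<open>1 \<le> M\<close>])
    show "(F has_vector_derivative f x) (at x within {1..M})" if "1 \<le> x" "x \<le> M" for x
      using hockey_stick_kernel_antiderivative[of x M] that
      unfolding F_def[abs_def] f_def has_real_derivative_iff_has_vector_derivative[symmetric]
      by (auto intro: has_field_derivative_at_within)
  qed fact
  also have "F M - F 1 = 2 * (sqrt M - 1)\<^sup>2"
  proof -
    have "M * M powr (-1/2) = sqrt M" and "M powr (1/2) = sqrt M"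
      using assms by (simp_all add: powr_mult_base powr_half_sqrt)
    then have "F M = - 4 * sqrt M" by (simp add: F_def)
    moreover have "M = (sqrt M)\<^sup>2" using assms by simp
    ultimately show ?thesis by (simp add: F_def power2_eq_square algebra_simps)
  qed
  finally show "(LBINT \<gamma>:{1..}. \<gamma> powr (-3/2) * max (M - \<gamma>) 0) = 2 * (sqrt M - 1)\<^sup>2"
    unfolding set_lebesgue_integral_def support .
qed

lemma set_integral_le_nonneg_bound:
  fixes f g :: "'a \<Rightarrow> real"
  assumes "set_integrable M A g" and "\<And>x. x \<in> A \<Longrightarrow> f x \<le> g x" and "0 \<le> (LINT x:A|M. g x)"
  shows "(LINT x:A|M. f x) \<le> (LINT x:A|M. g x)"
proof (cases "set_integrable M A f")
  case True
  then show ?thesis using assms(1,2) by (rule set_integral_mono)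
next
  \<comment> \<open>A non-integrable function has Bochner integral 0.\<close>
  case False
  then have "(LINT x:A|M. f x) = 0"
    unfolding set_integrable_def set_lebesgue_integral_def by (rule not_integrable_integral_eq)
  then show ?thesis using assms(3) by simp
qed

lemma H_half_le_of_interpolation_bounds:
  assumes "1 < M" and "1 < M'" and "0 \<le> \<epsilon>"
    and bound: "\<And>\<gamma>. 1 \<le> \<gamma> \<Longrightarrow> E_hs \<gamma> \<rho> \<sigma> \<le> \<epsilon> * (max (M - \<gamma>) 0 / (M - 1))"
    and bound': "\<And>\<gamma>. 1 \<le> \<gamma> \<Longrightarrow> E_hs \<gamma> \<sigma> \<rho> \<le> \<epsilon> * (max (M' - \<gamma>) 0 / (M' - 1))"
  shows "H_half \<rho> \<sigma> \<le> ((sqrt M - 1)\<^sup>2 / (M - 1) + (sqrt M' - 1)\<^sup>2 / (M' - 1)) * \<epsilon>"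
proof -
  define k where "k N \<gamma> = \<gamma> powr (-3/2) * max (N - \<gamma>) 0" for N \<gamma> :: real
  define g where "g \<gamma> = \<epsilon> / (M - 1) * k M \<gamma> + \<epsilon> / (M' - 1) * k M' \<gamma>" for \<gamma>
  have int: "set_integrable lborel {1..} (k N)" and val: "(LBINT \<gamma>:{1..}. k N \<gamma>) = 2 * (sqrt N - 1)\<^sup>2"
    if "1 < N" for N
    using hockey_stick_kernel_integral[of N] that by (simp_all add: k_def[abs_def])
  have "set_integrable lborel {1..} g"
    unfolding g_def using int \<open>1 < M\<close> \<open>1 < M'\<close> by (intro set_integral_add set_integrable_mult_right) auto
  moreover have g_value: "(LBINT \<gamma>:{1..}. g \<gamma>)
      = 2 * ((sqrt M - 1)\<^sup>2 / (M - 1) + (sqrt M' - 1)\<^sup>2 / (M' - 1)) * \<epsilon>"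
    unfolding g_def using int val \<open>1 < M\<close> \<open>1 < M'\<close>
    by (simp add: set_integral_add set_integrable_mult_right set_integral_mult_right algebra_simps)
  moreover have "\<gamma> powr (-3/2) * (E_hs \<gamma> \<rho> \<sigma> + E_hs \<gamma> \<sigma> \<rho>) \<le> g \<gamma>" if "\<gamma> \<in> {1..}" for \<gamma>
  proof -
    have "E_hs \<gamma> \<rho> \<sigma> + E_hs \<gamma> \<sigma> \<rho> \<le> \<epsilon> * (max (M - \<gamma>) 0 / (M - 1)) + \<epsilon> * (max (M' - \<gamma>) 0 / (M' - 1))"
      using bound[of \<gamma>] bound'[of \<gamma>] that by simp
    then have "\<gamma> powr (-3/2) * (E_hs \<gamma> \<rho> \<sigma> + E_hs \<gamma> \<sigma> \<rho>)
        \<le> \<gamma> powr (-3/2) * (\<epsilon> * (max (M - \<gamma>) 0 / (M - 1)) + \<epsilon> * (max (M' - \<gamma>) 0 / (M' - 1)))"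
      by (rule mult_left_mono) simp
    then show ?thesis by (simp add: g_def k_def distrib_left mult_ac)
  qed
  moreover have "0 \<le> (LBINT \<gamma>:{1..}. g \<gamma>)"
    unfolding g_value using \<open>1 < M\<close> \<open>1 < M'\<close> \<open>0 \<le> \<epsilon>\<close> by simp
  ultimately have "(LBINT \<gamma>:{1..}. \<gamma> powr (-3/2) * (E_hs \<gamma> \<rho> \<sigma> + E_hs \<gamma> \<sigma> \<rho>)) \<le> (LBINT \<gamma>:{1..}. g \<gamma>)"
    by (intro set_integral_le_nonneg_bound) auto
  then show ?thesis
    unfolding H_half_def g_value by (simp add: algebra_simps)
qed

lemma exp_half_ln: "0 < x \<Longrightarrow> exp (ln x / 2) = sqrt x"
  by (simp add: powr_half_sqrt[symmetric] powr_def)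

theorem mainTheorem17:
  fixes \<rho> \<sigma> :: "complex^'n^'n"
  assumes "quantum_state \<rho>" and "quantum_state \<sigma>"
    and "invertible \<rho>" and "invertible \<sigma>"
    and "\<rho> \<noteq> \<sigma>"
  shows "H_half \<rho> \<sigma> \<le>
    ((exp (D_max \<rho> \<sigma> / 2) - 1)^2 / (exp (D_max \<rho> \<sigma>) - 1)
     + (exp (D_max \<sigma> \<rho> / 2) - 1)^2 / (exp (D_max \<sigma> \<rho>) - 1)) * E_hs 1 \<rho> \<sigma>"
proof -
  have "psd \<rho>" "psd \<sigma>" "hermitian \<rho>" "hermitian \<sigma>" "trace \<rho> = trace \<sigma>"
    using assms(1,2) by (auto simp: quantum_state_def psd_def)
  define M M' where "M = max_ratio \<rho> \<sigma>" and "M' = max_ratio \<sigma> \<rho>"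
  have dom: "Re (qform \<rho> x) \<le> M * Re (qform \<sigma> x)" for x
    unfolding M_def by (rule qform_le_max_ratio[OF \<open>psd \<sigma>\<close> assms(4)])
  have dom': "Re (qform \<sigma> x) \<le> M' * Re (qform \<rho> x)" for x
    unfolding M'_def by (rule qform_le_max_ratio[OF \<open>psd \<rho>\<close> assms(3)])
  have "1 < M" by (rule dominating_constant_gt_1[OF assms(1,2,5) dom])
  have "1 < M'" using assms(5) by (intro dominating_constant_gt_1[OF assms(2,1) _ dom']) auto
  have "H_half \<rho> \<sigma> \<le> ((sqrt M - 1)\<^sup>2 / (M - 1) + (sqrt M' - 1)\<^sup>2 / (M' - 1)) * E_hs 1 \<rho> \<sigma>"
  proof (rule H_half_le_of_interpolation_bounds[OF \<open>1 < M\<close> \<open>1 < M'\<close>])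
    show "0 \<le> E_hs 1 \<rho> \<sigma>"
      unfolding E_hs_def by (intro trace_pos_part_nonneg hermitian_diff_scaleR) fact+
    show "E_hs \<gamma> \<rho> \<sigma> \<le> E_hs 1 \<rho> \<sigma> * (max (M - \<gamma>) 0 / (M - 1))" if "1 \<le> \<gamma>" for \<gamma>
      by (rule E_hs_le_interpolation[OF \<open>hermitian \<rho>\<close> \<open>psd \<sigma>\<close> dom \<open>1 < M\<close> that])
    show "E_hs \<gamma> \<sigma> \<rho> \<le> E_hs 1 \<rho> \<sigma> * (max (M' - \<gamma>) 0 / (M' - 1))" if "1 \<le> \<gamma>" for \<gamma>
      using E_hs_le_interpolation[OF \<open>hermitian \<sigma>\<close> \<open>psd \<rho>\<close> dom' \<open>1 < M'\<close> that]
        E_hs_1_commute[OF \<open>hermitian \<rho>\<close> \<open>hermitian \<sigma>\<close> \<open>trace \<rho> = trace \<sigma>\<close>]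
      by simp
  qed
  then show ?thesis
    using \<open>1 < M\<close> \<open>1 < M'\<close> by (simp add: D_max_eq_ln_max_ratio exp_half_ln flip: M_def M'_def)
qed

end
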